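(* Let $n$ be a positive integer and $P\subseteq S_n$ a nonempty set of permutations. If $|P|\le n/2$ then $\mathrm{cr}(P)=n$. Moreover, there exists $P\subseteq S_n$ with $|P|=\lfloor n/2\rfloor+1$ and $\mathrm{cr}(P)<n$.
   Context: $S_n$ is the symmetric group on $\{1,\dots,n\}$, viewed as a metric space with the Hamming distance: the distance between $g,h\in S_n$ is the number of points $i$ with $g(i)\ne h(i)$. The covering radius $\mathrm{cr}(P)$ of a nonempty set $P\subseteq S_n$ is the smallest integer $r$ such that every permutation in $S_n$ is at distance at most $r$ from some element of $P$. *)

theory Defs
  imports "HOL-Combinatorics.Permutations"
begin

definition sym_grp :: "nat \<Rightarrow> (nat \<Rightarrow> nat) set" where
  "sym_grp n = {\<sigma>. \<sigma> permutes {1..n}}"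

definition hamming :: "nat \<Rightarrow> (nat \<Rightarrow> nat) \<Rightarrow> (nat \<Rightarrow> nat) \<Rightarrow> nat" where
  "hamming n g h = card {i \<in> {1..n}. g i \<noteq> h i}"

definition covering_radius :: "nat \<Rightarrow> (nat \<Rightarrow> nat) set \<Rightarrow> nat" where
  "covering_radius n P =
     (LEAST r. \<forall>g \<in> sym_grp n. \<exists>p \<in> P. hamming n g p \<le> r)"

end

theory Submission
  imports Defs
begin

(* Lower bound: if |P| \<le> n/2 we construct a permutation g that agrees with
   no element of P at any point; then g is at distance n from all of P and
   cr(P) = n.  Start from any permutation and repeatedly remove a point i of
   its "agreement set": the points j with g j = p i for some p \<in> P, and
   the points j with p j = g i for some p \<in> P, are each at most |P| many
   (counting lemma card_le_card_of_unique_witnesses), both contain i, so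
   some j lies outside both, and composing g with the transposition (i j)
   shrinks the agreement set.

   Upper bound: with N = n div 2 + 1, the N cyclic shifts of {1..N} (fixing
   the remaining points) form a code P.  As 2N > n, by pigeonhole every
   permutation g maps some point i of {1..n-N+1} into {1..N}, and some shift
   sends i to g i; hence that shift is at distance at most n - 1 from g. *)

lemma card_le_card_of_unique_witnesses:
  assumes "finite P"
    and witness: "\<And>j. j \<in> J \<Longrightarrow> \<exists>p\<in>P. R p j"
    and unique: "\<And>p j j'. p \<in> P \<Longrightarrow> j \<in> J \<Longrightarrow> j' \<in> J \<Longrightarrow> R p j \<Longrightarrow> R p j' \<Longrightarrow> j = j'"
  shows "card J \<le> card P"
proof -
  define w where "w j = (SOME p. p \<in> P \<and> R p j)" for j
  have w: "w j \<in> P \<and> R (w j) j" if "j \<in> J" for j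
    using someI_ex[OF witness[OF that, unfolded Bex_def]] by (simp add: w_def)
  have "inj_on w J"
    by (rule inj_onI) (metis w unique)
  moreover have "w ` J \<subseteq> P" using w by blast
  ultimately show ?thesis using card_inj_on_le \<open>finite P\<close> by blast
qed

lemma permutes_meets:
  assumes g: "g permutes S" and "finite S" "A \<subseteq> S" "B \<subseteq> S"
    and big: "card S < card A + card B"
  shows "\<exists>i\<in>A. g i \<in> B"
proof (rule ccontr)
  assume "\<not> (\<exists>i\<in>A. g i \<in> B)"
  then have "g ` A \<subseteq> S - B" using permutes_in_image[OF g] \<open>A \<subseteq> S\<close> by blast
  moreover have "inj_on g A" using permutes_inj_on[OF g] .
  ultimately have "card A \<le> card (S - B)"
    using card_inj_on_le \<open>finite S\<close> by blast
  also have "\<dots> = card S - card B" using \<open>finite S\<close> \<open>B \<subseteq> S\<close> by (simp add: card_Diff_subset finite_subset)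
  finally show False using big card_mono[OF \<open>finite S\<close> \<open>B \<subseteq> S\<close>] by linarith
qed

definition agreement :: "'a set \<Rightarrow> ('a \<Rightarrow> 'a) set \<Rightarrow> ('a \<Rightarrow> 'a) \<Rightarrow> 'a set" where
  "agreement S P g = {i \<in> S. \<exists>p\<in>P. g i = p i}"

lemma agreement_shrinks:
  assumes "finite S" "finite P" and small: "2 * card P \<le> card S"
    and P: "\<And>p. p \<in> P \<Longrightarrow> p permutes S"
    and g: "g permutes S" and i: "i \<in> agreement S P g"
  shows "\<exists>h. h permutes S \<and> agreement S P h \<subset> agreement S P g"
proof -
  have iS: "i \<in> S" using i by (simp add: agreement_def)
  define A where "A = {j \<in> S. \<exists>p\<in>P. g j = p i}"
  define B where "B = {j \<in> S. \<exists>p\<in>P. p j = g i}"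
  have card_A: "card A \<le> card P" unfolding A_def
  proof (rule card_le_card_of_unique_witnesses[OF \<open>finite P\<close>, where R = "\<lambda>p j. g j = p i"])
    fix p j j' assume "g j = p i" "g j' = p i"
    then show "j = j'" using permutes_inj[OF g] by (metis injD)
  qed blast
  have card_B: "card B \<le> card P" unfolding B_def
  proof (rule card_le_card_of_unique_witnesses[OF \<open>finite P\<close>, where R = "\<lambda>p j. p j = g i"])
    fix p j j' assume "p \<in> P" "p j = g i" "p j' = g i"
    then show "j = j'" using permutes_inj[OF P[OF \<open>p \<in> P\<close>]] by (metis injD)
  qed blast
  have fin: "finite A" "finite B" using \<open>finite S\<close> by (auto simp: A_def B_def)
  have "i \<in> A \<inter> B" using i by (auto simp: agreement_def A_def B_def)
  then have "card (A \<inter> B) \<ge> 1" using fin by (metis One_nat_def Suc_leI card_gt_0_iff empty_iff finite_Int)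
  then have "card (A \<union> B) < card S"
    using card_Un_Int[OF fin] card_A card_B small by linarith
  then have "\<not> S \<subseteq> A \<union> B" using fin card_mono[of "A \<union> B" S] by auto
  then obtain j where j: "j \<in> S" "j \<notin> A" "j \<notin> B" by blast
  define h where "h = g \<circ> transpose i j"
  have h: "h permutes S"
    unfolding h_def by (rule permutes_compose[OF permutes_swap_id[OF iS j(1)] g])
  have "agreement S P h \<subseteq> agreement S P g - {i}"
  proof
    fix x assume "x \<in> agreement S P h"
    then obtain p where p: "p \<in> P" "h x = p x" and xS: "x \<in> S"
      by (auto simp: agreement_def)
    have "x \<noteq> i"
    proof
      assume "x = i"
      then have "g j = p i" using p by (simp add: h_def)
      then show False using j p by (auto simp: A_def)
    qed
    moreover have "x \<noteq> j"
    proof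
      assume "x = j"
      then have "p j = g i" using p by (simp add: h_def)
      then show False using j p by (auto simp: B_def)
    qed
    ultimately show "x \<in> agreement S P g - {i}"
      using p xS by (auto simp: h_def agreement_def)
  qed
  then have "agreement S P h \<subset> agreement S P g" using i by blast
  with h show ?thesis by blast
qed

lemma exists_permutation_avoiding:
  assumes "finite S" "finite P" "2 * card P \<le> card S"
    and P: "\<And>p. p \<in> P \<Longrightarrow> p permutes S"
  shows "\<exists>g. g permutes S \<and> (\<forall>i\<in>S. \<forall>p\<in>P. g i \<noteq> p i)"
proof -
  have "\<exists>g. g permutes S \<and> agreement S P g = {}" if "f permutes S" for f
    using that
  proof (induction "card (agreement S P f)" arbitrary: f rule: less_induct)
    case less
    show ?case
    proof (cases "agreement S P f = {}")
      case False
      then obtain i where "i \<in> agreement S P f" by blast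
      then obtain h where h: "h permutes S" "agreement S P h \<subset> agreement S P f"
        using agreement_shrinks[OF assms less.prems] by blast
      have "finite (agreement S P f)"
        using \<open>finite S\<close> by (simp add: agreement_def)
      then have "card (agreement S P h) < card (agreement S P f)"
        using h(2) by (rule psubset_card_mono)
      then show ?thesis using less.hyps h(1) by blast
    qed (use less.prems in blast)
  qed
  then obtain g where "g permutes S" "agreement S P g = {}" using permutes_id by blast
  then show ?thesis by (auto simp: agreement_def)
qed

lemma hamming_le: "hamming n g p \<le> n"
proof -
  have "hamming n g p \<le> card {1..n}" unfolding hamming_def by (rule card_mono) auto
  then show ?thesis by simp
qed

lemma hamming_le_if_agree:
  assumes "i \<in> {1..n}" "g i = p i"
  shows "hamming n g p \<le> n - 1"
proof -
  have "hamming n g p \<le> card ({1..n} - {i})"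
    unfolding hamming_def using assms by (intro card_mono) auto
  then show ?thesis using assms by simp
qed

lemma covering_radius_le:
  assumes "\<And>g. g \<in> sym_grp n \<Longrightarrow> \<exists>p\<in>P. hamming n g p \<le> r"
  shows "covering_radius n P \<le> r"
  unfolding covering_radius_def by (rule Least_le) (use assms in blast)

lemma covering_radius_eq_n:
  assumes "P \<noteq> {}" and g: "g \<in> sym_grp n"
    and far: "\<And>i p. i \<in> {1..n} \<Longrightarrow> p \<in> P \<Longrightarrow> g i \<noteq> p i"
  shows "covering_radius n P = n"
  unfolding covering_radius_def
proof (rule Least_equality)
  show "\<forall>g\<in>sym_grp n. \<exists>p\<in>P. hamming n g p \<le> n"
    using \<open>P \<noteq> {}\<close> hamming_le by blast
next
  fix r assume "\<forall>g\<in>sym_grp n. \<exists>p\<in>P. hamming n g p \<le> r"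
  then obtain p where "p \<in> P" "hamming n g p \<le> r" using g by blast
  moreover have "{i \<in> {1..n}. g i \<noteq> p i} = {1..n}" using far \<open>p \<in> P\<close> by auto
  ultimately show "n \<le> r" by (simp add: hamming_def)
qed

text \<open>The k-th power of the cycle (1 2 ... N), fixing all other points.\<close>
definition shift :: "nat \<Rightarrow> nat \<Rightarrow> nat \<Rightarrow> nat" where
  "shift N k i = (if 1 \<le> i \<and> i \<le> N then (if i + k \<le> N then i + k else i + k - N) else i)"

lemma shift_permutes:
  assumes "k < N" "N \<le> n"
  shows "shift N k permutes {1..n}"
proof (rule bij_imp_permutes)
  have inj: "inj_on (shift N k) {1..n}"
    using assms by (intro inj_onI) (auto simp: shift_def split: if_splits)
  moreover have "shift N k ` {1..n} \<subseteq> {1..n}"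
    using assms by (auto simp: shift_def)
  ultimately show "bij_betw (shift N k) {1..n} {1..n}"
    by (simp add: bij_betw_def endo_inj_surj)
  show "\<And>x. x \<notin> {1..n} \<Longrightarrow> shift N k x = x" using assms by (auto simp: shift_def)
qed

lemma shift_transitive:
  assumes "i \<in> {1..N}" "t \<in> {1..N}"
  shows "\<exists>k<N. shift N k i = t"
proof (cases "i \<le> t")
  case True
  then show ?thesis using assms by (intro exI[of _ "t - i"]) (auto simp: shift_def)
next
  case False
  then show ?thesis using assms by (intro exI[of _ "t + N - i"]) (auto simp: shift_def)
qed

text \<open>The N shifts are pairwise distinct (they differ at the point 1).\<close>
lemma shift_inj: "inj_on (shift N) {..<N}"
proof (rule inj_onI)
  fix a b assume "a \<in> {..<N}" "b \<in> {..<N}" "shift N a = shift N b"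
  then have "shift N a 1 = shift N b 1" by simp
  then show "a = b" using \<open>a \<in> {..<N}\<close> \<open>b \<in> {..<N}\<close> by (auto simp: shift_def)
qed

lemma shifts_cover:
  assumes "n < 2 * N" "N \<le> n" and g: "g permutes {1..n}"
  shows "\<exists>k<N. hamming n g (shift N k) \<le> n - 1"
proof -
  have "{1..n - N + 1} \<subseteq> {1..n}" "{1..N} \<subseteq> {1..n}" using assms by auto
  moreover have "card {1..n} < card {1..n - N + 1} + card {1..N}" using assms by simp
  ultimately obtain i where i: "i \<in> {1..n - N + 1}" "g i \<in> {1..N}"
    using permutes_meets[OF g] by blast
  moreover have "i \<in> {1..N}" using i assms by auto
  ultimately obtain k where "k < N" "shift N k i = g i"
    using shift_transitive by blast
  then show ?thesis using hamming_le_if_agree[of i n g "shift N k"] i assms by auto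
qed

theorem theorem6p1:
  fixes n :: nat
  assumes "n \<ge> 1"
  shows "(\<forall>P. P \<subseteq> sym_grp n \<and> P \<noteq> {} \<and> 2 * card P \<le> n
              \<longrightarrow> covering_radius n P = n)
         \<and> (\<exists>P. P \<subseteq> sym_grp n \<and> card P = n div 2 + 1
              \<and> covering_radius n P < n)"
proof (intro conjI allI impI)
  fix P assume P: "P \<subseteq> sym_grp n \<and> P \<noteq> {} \<and> 2 * card P \<le> n"
  then have "finite P"
    using finite_permutations[of "{1..n}"] finite_subset by (auto simp: sym_grp_def)
  then obtain g where "g permutes {1..n}" "\<forall>i\<in>{1..n}. \<forall>p\<in>P. g i \<noteq> p i"
    using exists_permutation_avoiding[of "{1..n}" P] P by (auto simp: sym_grp_def)
  then show "covering_radius n P = n"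
    using covering_radius_eq_n[of P g n] P by (auto simp: sym_grp_def)
next
  define N where "N = n div 2 + 1"
  have N: "n < 2 * N" "N \<le> n" using assms by (auto simp: N_def)
  define P where "P = shift N ` {..<N}"
  have "P \<subseteq> sym_grp n" using shift_permutes N by (auto simp: P_def sym_grp_def)
  moreover have "card P = n div 2 + 1"
    using card_image[OF shift_inj] by (simp add: P_def N_def)
  moreover have "covering_radius n P \<le> n - 1"
    using shifts_cover[OF N] by (intro covering_radius_le) (auto simp: P_def sym_grp_def)
  ultimately show "\<exists>P. P \<subseteq> sym_grp n \<and> card P = n div 2 + 1 \<and> covering_radius n P < n"
    using assms by (intro exI[of _ P]) auto
qed

end
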